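(* Let $M$ be an intrinsically projective right $R$-module and let $A,B\le M$ be finitely $M$-presented submodules. Then $A+B$ is finitely $M$-presented if and only if $A\cap B$ is finitely $M$-generated.
   Context: $M^{(n)}$ denotes the direct sum of $n$ copies of $M$. A module $N$ is finitely $M$-generated if there is an epimorphism $M^{(n)}\to N$ for some $n>0$. $N$ is finitely $M$-presented if there is an exact sequence $M^{(\ell)}\to M^{(n)}\to N\to 0$ for some integers $n,\ell>0$. $M$ is intrinsically projective if for every integer $n>0$, every submodule $N\le M$, every epimorphism $\alpha:M^{(n)}\to N$ and every homomorphism $\beta:M\to N$, there exists $\gamma:M\to M^{(n)}$ with $\alpha\gamma=\beta$. *)

theory Defs
  imports "HOL-Algebra.Ring"
begin

text \<open>HOL-Algebra's module locale requires a commutative ring, so we define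
  right modules directly.\<close>

record ('m, 'r) rmod =
  mcar  :: "'m set"
  madd  :: "'m \<Rightarrow> 'm \<Rightarrow> 'm"
  mzero :: "'m"
  mact  :: "'m \<Rightarrow> 'r \<Rightarrow> 'm"

definition right_module :: "('r, 'a) ring_scheme \<Rightarrow> ('m, 'r, 'b) rmod_scheme \<Rightarrow> bool" where
  "right_module R M \<longleftrightarrow> ring R \<and>
     mzero M \<in> mcar M \<and>
     (\<forall>x\<in>mcar M. \<forall>y\<in>mcar M. madd M x y \<in> mcar M) \<and>
     (\<forall>x\<in>mcar M. \<forall>y\<in>mcar M. \<forall>z\<in>mcar M. madd M (madd M x y) z = madd M x (madd M y z)) \<and>
     (\<forall>x\<in>mcar M. \<forall>y\<in>mcar M. madd M x y = madd M y x) \<and>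
     (\<forall>x\<in>mcar M. madd M (mzero M) x = x) \<and>
     (\<forall>x\<in>mcar M. \<exists>y\<in>mcar M. madd M x y = mzero M) \<and>
     (\<forall>x\<in>mcar M. \<forall>r\<in>carrier R. mact M x r \<in> mcar M) \<and>
     (\<forall>x\<in>mcar M. \<forall>y\<in>mcar M. \<forall>r\<in>carrier R.
        mact M (madd M x y) r = madd M (mact M x r) (mact M y r)) \<and>
     (\<forall>x\<in>mcar M. \<forall>r\<in>carrier R. \<forall>s\<in>carrier R.
        mact M x (r \<oplus>\<^bsub>R\<^esub> s) = madd M (mact M x r) (mact M x s)) \<and>
     (\<forall>x\<in>mcar M. \<forall>r\<in>carrier R. \<forall>s\<in>carrier R.
        mact M x (r \<otimes>\<^bsub>R\<^esub> s) = mact M (mact M x r) s) \<and>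
     (\<forall>x\<in>mcar M. mact M x \<one>\<^bsub>R\<^esub> = x)"

definition submodule :: "('r, 'a) ring_scheme \<Rightarrow> ('m, 'r, 'b) rmod_scheme \<Rightarrow> 'm set \<Rightarrow> bool" where
  "submodule R M N \<longleftrightarrow> N \<subseteq> mcar M \<and> mzero M \<in> N \<and>
     (\<forall>x\<in>N. \<forall>y\<in>N. madd M x y \<in> N) \<and>
     (\<forall>x\<in>N. \<exists>y\<in>N. madd M x y = mzero M) \<and>
     (\<forall>x\<in>N. \<forall>r\<in>carrier R. mact M x r \<in> N)"

definition submod :: "('m, 'r, 'b) rmod_scheme \<Rightarrow> 'm set \<Rightarrow> ('m, 'r, 'b) rmod_scheme" where
  "submod M N = M\<lparr>mcar := N\<rparr>"

definition msum :: "('m, 'r, 'b) rmod_scheme \<Rightarrow> 'm set \<Rightarrow> 'm set \<Rightarrow> 'm set" where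
  "msum M A B = {madd M a b | a b. a \<in> A \<and> b \<in> B}"

definition dsum :: "('m, 'r, 'b) rmod_scheme \<Rightarrow> nat \<Rightarrow> (nat \<Rightarrow> 'm, 'r) rmod" where
  "dsum M n = \<lparr> mcar = {f. (\<forall>i<n. f i \<in> mcar M) \<and> (\<forall>i\<ge>n. f i = mzero M)},
                madd = (\<lambda>f g i. if i < n then madd M (f i) (g i) else mzero M),
                mzero = (\<lambda>i. mzero M),
                mact = (\<lambda>f r i. if i < n then mact M (f i) r else mzero M) \<rparr>"

definition rhom :: "('r, 'a) ring_scheme \<Rightarrow> ('m, 'r, 'b) rmod_scheme \<Rightarrow> ('n, 'r, 'c) rmod_scheme
                     \<Rightarrow> ('m \<Rightarrow> 'n) \<Rightarrow> bool" where
  "rhom R M N f \<longleftrightarrow> (\<forall>x\<in>mcar M. f x \<in> mcar N) \<and>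
     (\<forall>x\<in>mcar M. \<forall>y\<in>mcar M. f (madd M x y) = madd N (f x) (f y)) \<and>
     (\<forall>x\<in>mcar M. \<forall>r\<in>carrier R. f (mact M x r) = mact N (f x) r)"

definition repi :: "('r, 'a) ring_scheme \<Rightarrow> ('m, 'r, 'b) rmod_scheme \<Rightarrow> ('n, 'r, 'c) rmod_scheme
                     \<Rightarrow> ('m \<Rightarrow> 'n) \<Rightarrow> bool" where
  "repi R M N f \<longleftrightarrow> rhom R M N f \<and> f ` mcar M = mcar N"

definition fin_M_generated :: "('r, 'a) ring_scheme \<Rightarrow> ('m, 'r, 'b) rmod_scheme
                     \<Rightarrow> ('n, 'r, 'c) rmod_scheme \<Rightarrow> bool" where
  "fin_M_generated R M N \<longleftrightarrow> (\<exists>n>0. \<exists>\<alpha>. repi R (dsum M n) N \<alpha>)"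

definition fin_M_presented :: "('r, 'a) ring_scheme \<Rightarrow> ('m, 'r, 'b) rmod_scheme
                     \<Rightarrow> ('n, 'r, 'c) rmod_scheme \<Rightarrow> bool" where
  "fin_M_presented R M N \<longleftrightarrow> (\<exists>n>0. \<exists>l>0. \<exists>\<alpha> \<beta>.
      rhom R (dsum M l) (dsum M n) \<beta> \<and> repi R (dsum M n) N \<alpha> \<and>
      \<beta> ` mcar (dsum M l) = {x \<in> mcar (dsum M n). \<alpha> x = mzero N})"

definition intrinsically_projective :: "('r, 'a) ring_scheme \<Rightarrow> ('m, 'r, 'b) rmod_scheme \<Rightarrow> bool" where
  "intrinsically_projective R M \<longleftrightarrow>
     (\<forall>n>0. \<forall>N. submodule R M N \<longrightarrow>
        (\<forall>\<alpha> \<beta>. repi R (dsum M n) (submod M N) \<alpha> \<longrightarrow> rhom R M (submod M N) \<beta> \<longrightarrow>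
           (\<exists>\<gamma>. rhom R M (dsum M n) \<gamma> \<and> (\<forall>x\<in>mcar M. \<alpha> (\<gamma> x) = \<beta> x))))"

end

theory Submission
  imports Defs
begin

text \<open>Present A and B by epimorphisms \<open>\<alpha>A : M^(a) \<rightarrow> A\<close> and \<open>\<alpha>B : M^(b) \<rightarrow> B\<close> with finitely
  M-generated kernels. Then \<open>\<pi> = [\<alpha>A, \<alpha>B] : M^(a+b) \<rightarrow> A + B\<close> is an epimorphism, and
  \<open>(x, y) \<mapsto> \<alpha>A x\<close> maps \<open>ker \<pi>\<close> onto \<open>A \<inter> B\<close>. Intrinsic projectivity of M extends to
  lifting homomorphisms \<open>M^(k) \<rightarrow> N\<close> along epimorphisms \<open>M^(n) \<rightarrow> N\<close> onto submodules
  \<open>N \<le> M\<close>; with lifts in both directions between two epimorphisms onto the same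
  submodule, a Schanuel-type argument shows that if \<open>A + B\<close> is finitely M-presented then
  \<open>ker \<pi>\<close>, and hence its image \<open>A \<inter> B\<close>, is finitely M-generated. Conversely, lifting a
  generating map \<open>\<delta> : M^(c) \<rightarrow> A \<inter> B\<close> through \<open>\<alpha>A\<close> and \<open>\<alpha>B\<close> to \<open>\<gamma>, \<gamma>'\<close> shows that
  \<open>ker \<pi>\<close> is the sum of \<open>ker \<alpha>A \<oplus> ker \<alpha>B\<close> and the image of \<open>(\<gamma>, -\<gamma>')\<close>, hence finitely
  M-generated, so \<open>A + B\<close> is finitely M-presented.\<close>

section \<open>Arithmetic in right modules\<close>

definition mneg :: "('m, 'r, 'b) rmod_scheme \<Rightarrow> 'm \<Rightarrow> 'm" where
  "mneg M x = (SOME y. y \<in> mcar M \<and> madd M x y = mzero M)"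

fun msum_below :: "('m, 'r, 'b) rmod_scheme \<Rightarrow> nat \<Rightarrow> (nat \<Rightarrow> 'm) \<Rightarrow> 'm" where
  "msum_below M 0 f = mzero M"
| "msum_below M (Suc k) f = madd M (msum_below M k f) (f k)"

locale rmodule =
  fixes R :: "('r, 'a) ring_scheme" and M :: "('m, 'r, 'b) rmod_scheme"
  assumes right_module: "right_module R M"
begin

lemma zero_closed [simp]: "mzero M \<in> mcar M"
  using right_module unfolding right_module_def by blast

lemma add_closed [simp]: "x \<in> mcar M \<Longrightarrow> y \<in> mcar M \<Longrightarrow> madd M x y \<in> mcar M"
  using right_module unfolding right_module_def by metis

lemma add_assoc:
  "x \<in> mcar M \<Longrightarrow> y \<in> mcar M \<Longrightarrow> z \<in> mcar M \<Longrightarrow> madd M (madd M x y) z = madd M x (madd M y z)"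
  using right_module unfolding right_module_def by blast

lemma add_commute: "x \<in> mcar M \<Longrightarrow> y \<in> mcar M \<Longrightarrow> madd M x y = madd M y x"
  using right_module unfolding right_module_def by blast

lemma zero_add [simp]: "x \<in> mcar M \<Longrightarrow> madd M (mzero M) x = x"
  using right_module unfolding right_module_def by blast

lemma add_zero [simp]: "x \<in> mcar M \<Longrightarrow> madd M x (mzero M) = x"
  using add_commute[of x "mzero M"] by simp

lemma act_closed [simp]: "x \<in> mcar M \<Longrightarrow> r \<in> carrier R \<Longrightarrow> mact M x r \<in> mcar M"
  using right_module unfolding right_module_def by blast

lemma act_add:
  "x \<in> mcar M \<Longrightarrow> y \<in> mcar M \<Longrightarrow> r \<in> carrier R \<Longrightarrow>
   mact M (madd M x y) r = madd M (mact M x r) (mact M y r)"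
  using right_module unfolding right_module_def by blast

lemma neg_exists: "x \<in> mcar M \<Longrightarrow> \<exists>y\<in>mcar M. madd M x y = mzero M"
  using right_module unfolding right_module_def by blast

lemma neg_closed [simp]: "x \<in> mcar M \<Longrightarrow> mneg M x \<in> mcar M"
  unfolding mneg_def using neg_exists by (metis (mono_tags, lifting) someI)

lemma add_neg [simp]: "x \<in> mcar M \<Longrightarrow> madd M x (mneg M x) = mzero M"
  unfolding mneg_def using neg_exists by (metis (mono_tags, lifting) someI)

lemma neg_add_self [simp]: "x \<in> mcar M \<Longrightarrow> madd M (mneg M x) x = mzero M"
  using add_commute by simp

lemma add_left_cancel:
  assumes "x \<in> mcar M" "y \<in> mcar M" "z \<in> mcar M" "madd M x y = madd M x z"
  shows "y = z"
proof -
  have "y = madd M (madd M (mneg M x) x) y" using assms by simp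
  also have "\<dots> = madd M (mneg M x) (madd M x y)" using assms by (intro add_assoc) simp_all
  also have "\<dots> = madd M (mneg M x) (madd M x z)" using assms by simp
  also have "\<dots> = madd M (madd M (mneg M x) x) z" using assms by (intro add_assoc[symmetric]) simp_all
  also have "\<dots> = z" using assms by simp
  finally show ?thesis .
qed

lemma act_zero [simp]: "r \<in> carrier R \<Longrightarrow> mact M (mzero M) r = mzero M"
  using add_left_cancel[of "mact M (mzero M) r" "mact M (mzero M) r" "mzero M"]
    act_add[of "mzero M" "mzero M" r] by simp

lemma neg_unique: "x \<in> mcar M \<Longrightarrow> y \<in> mcar M \<Longrightarrow> madd M x y = mzero M \<Longrightarrow> mneg M x = y"
  using add_left_cancel[of x "mneg M x" y] by simp

lemma neg_eq_of_add_eq_zero: "x \<in> mcar M \<Longrightarrow> y \<in> mcar M \<Longrightarrow> madd M x y = mzero M \<Longrightarrow> mneg M y = x"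
  using neg_unique add_commute by metis

lemma add_swap:
  assumes "a \<in> mcar M" "b \<in> mcar M" "c \<in> mcar M" "d \<in> mcar M"
  shows "madd M (madd M a b) (madd M c d) = madd M (madd M a c) (madd M b d)"
  using assms add_assoc add_commute by (metis add_closed)

lemma neg_add: "x \<in> mcar M \<Longrightarrow> y \<in> mcar M \<Longrightarrow> mneg M (madd M x y) = madd M (mneg M x) (mneg M y)"
  by (rule neg_unique) (simp_all add: add_swap[of x y "mneg M x" "mneg M y"])

lemma act_neg: "x \<in> mcar M \<Longrightarrow> r \<in> carrier R \<Longrightarrow> mneg M (mact M x r) = mact M (mneg M x) r"
  by (rule neg_unique) (simp_all flip: act_add)

lemma add_neg_cancel [simp]: "x \<in> mcar M \<Longrightarrow> y \<in> mcar M \<Longrightarrow> madd M (madd M x (mneg M y)) y = x"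
  by (simp add: add_assoc)

lemma add_cancel_neg [simp]: "x \<in> mcar M \<Longrightarrow> y \<in> mcar M \<Longrightarrow> madd M (madd M x y) (mneg M y) = x"
  by (simp add: add_assoc)

lemma msum_below_closed [simp]: "(\<And>i. i < k \<Longrightarrow> f i \<in> mcar M) \<Longrightarrow> msum_below M k f \<in> mcar M"
  by (induction k) auto

lemma msum_below_add:
  "(\<And>i. i < k \<Longrightarrow> f i \<in> mcar M) \<Longrightarrow> (\<And>i. i < k \<Longrightarrow> g i \<in> mcar M) \<Longrightarrow>
   msum_below M k (\<lambda>i. madd M (f i) (g i)) = madd M (msum_below M k f) (msum_below M k g)"
  by (induction k) (auto simp: add_swap)

lemma msum_below_act:
  "(\<And>i. i < k \<Longrightarrow> f i \<in> mcar M) \<Longrightarrow> r \<in> carrier R \<Longrightarrow>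
   msum_below M k (\<lambda>i. mact M (f i) r) = mact M (msum_below M k f) r"
  by (induction k) (auto simp: act_add)

lemma msum_below_single:
  "v \<in> mcar M \<Longrightarrow> msum_below M k (\<lambda>i. if j = i then v else mzero M) = (if j < k then v else mzero M)"
  by (induction k) auto

end

lemma msum_below_cong: "(\<And>i. i < k \<Longrightarrow> f i = g i) \<Longrightarrow> msum_below M k f = msum_below M k g"
  by (induction k) auto

lemma rhom_closed: "rhom R X Y f \<Longrightarrow> x \<in> mcar X \<Longrightarrow> f x \<in> mcar Y"
  unfolding rhom_def by blast

lemma rhom_add: "rhom R X Y f \<Longrightarrow> x \<in> mcar X \<Longrightarrow> y \<in> mcar X \<Longrightarrow> f (madd X x y) = madd Y (f x) (f y)"
  unfolding rhom_def by blast

lemma rhom_act: "rhom R X Y f \<Longrightarrow> x \<in> mcar X \<Longrightarrow> r \<in> carrier R \<Longrightarrow> f (mact X x r) = mact Y (f x) r"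
  unfolding rhom_def by blast

lemma rhom_id: "rhom R X X (\<lambda>x. x)"
  unfolding rhom_def by blast

lemma rhom_comp: "rhom R X Y f \<Longrightarrow> rhom R Y Z g \<Longrightarrow> rhom R X Z (\<lambda>x. g (f x))"
  unfolding rhom_def by auto

lemma rhom_zero:
  assumes "right_module R X" "right_module R Y" "rhom R X Y f"
  shows "f (mzero X) = mzero Y"
proof -
  interpret X: rmodule R X by (rule rmodule.intro) fact
  interpret Y: rmodule R Y by (rule rmodule.intro) fact
  have c: "f (mzero X) \<in> mcar Y" using rhom_closed[OF assms(3) X.zero_closed] .
  have "madd Y (f (mzero X)) (f (mzero X)) = madd Y (f (mzero X)) (mzero Y)"
    using rhom_add[OF assms(3) X.zero_closed X.zero_closed] c by simp
  then show ?thesis using Y.add_left_cancel[OF c c Y.zero_closed] by simp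
qed

lemma rhom_neg:
  assumes "right_module R X" "right_module R Y" "rhom R X Y f" "x \<in> mcar X"
  shows "f (mneg X x) = mneg Y (f x)"
proof -
  interpret X: rmodule R X by (rule rmodule.intro) fact
  interpret Y: rmodule R Y by (rule rmodule.intro) fact
  have "madd Y (f x) (f (mneg X x)) = mzero Y"
    using rhom_add[OF assms(3,4) X.neg_closed[OF assms(4)]] rhom_zero[OF assms(1-3)] assms(4) by simp
  then show ?thesis
    using Y.neg_unique rhom_closed[OF assms(3)] assms(4) X.neg_closed by metis
qed

lemma rhom_add_fun:
  assumes "right_module R Y" "rhom R X Y f" "rhom R X Y g"
  shows "rhom R X Y (\<lambda>x. madd Y (f x) (g x))"
proof -
  interpret rmodule R Y by (rule rmodule.intro) fact
  note c = rhom_closed[OF assms(2)] rhom_closed[OF assms(3)]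
  show ?thesis
    unfolding rhom_def
  proof (intro conjI ballI)
    fix x assume "x \<in> mcar X"
    then show "madd Y (f x) (g x) \<in> mcar Y" using c by simp
  next
    fix x y assume x: "x \<in> mcar X" and y: "y \<in> mcar X"
    then show "madd Y (f (madd X x y)) (g (madd X x y)) = madd Y (madd Y (f x) (g x)) (madd Y (f y) (g y))"
      using rhom_add[OF assms(2) x y] rhom_add[OF assms(3) x y] add_swap c by simp
  next
    fix x r assume x: "x \<in> mcar X" and r: "r \<in> carrier R"
    then show "madd Y (f (mact X x r)) (g (mact X x r)) = mact Y (madd Y (f x) (g x)) r"
      using rhom_act[OF assms(2) x r] rhom_act[OF assms(3) x r] act_add c by simp
  qed
qed

lemma rhom_neg_fun:
  assumes "right_module R Y" "rhom R X Y f"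
  shows "rhom R X Y (\<lambda>x. mneg Y (f x))"
proof -
  interpret rmodule R Y by (rule rmodule.intro) fact
  show ?thesis
    unfolding rhom_def using rhom_closed[OF assms(2)]
    by (auto simp: rhom_add[OF assms(2)] rhom_act[OF assms(2)] neg_add act_neg)
qed

lemma rhom_msum_below:
  assumes "right_module R X" "right_module R Y" "rhom R X Y f" "\<And>i. i < k \<Longrightarrow> g i \<in> mcar X"
  shows "f (msum_below X k g) = msum_below Y k (\<lambda>i. f (g i))"
  using assms(4)
proof (induction k)
  case 0
  then show ?case using rhom_zero[OF assms(1-3)] by simp
next
  case (Suc k)
  then show ?case
    using rhom_add[OF assms(3)] rmodule.msum_below_closed[OF rmodule.intro[OF assms(1)]] by simp
qed

lemma rhom_submod_iff:
  "N \<subseteq> mcar M \<Longrightarrow> rhom R X (submod M N) f \<longleftrightarrow> rhom R X M f \<and> (\<forall>x\<in>mcar X. f x \<in> N)"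
  unfolding rhom_def submod_def by auto

lemma repi_submod_iff:
  "N \<subseteq> mcar M \<Longrightarrow> repi R X (submod M N) f \<longleftrightarrow> rhom R X M f \<and> f ` mcar X = N"
  unfolding repi_def using rhom_submod_iff[of N M R X f] by (auto simp: submod_def)

lemma repi_submodD:
  "submodule R M N \<Longrightarrow> repi R X (submod M N) f \<Longrightarrow> rhom R X M f \<and> f ` mcar X = N"
  using repi_submod_iff[of N M R X f] unfolding submodule_def by blast

definition rkernel :: "('m, 'r, 'b) rmod_scheme \<Rightarrow> ('n, 'r, 'c) rmod_scheme \<Rightarrow> ('m \<Rightarrow> 'n) \<Rightarrow> 'm set" where
  "rkernel X Y f = {x \<in> mcar X. f x = mzero Y}"

lemma rkernel_submod [simp]: "rkernel X (submod M N) f = rkernel X M f"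
  by (simp add: rkernel_def submod_def)

lemma submodule_neg_closed:
  assumes "right_module R M" "submodule R M N" "x \<in> N"
  shows "mneg M x \<in> N"
proof -
  interpret rmodule R M by (rule rmodule.intro) fact
  obtain y where "y \<in> N" "madd M x y = mzero M" using assms(2,3) unfolding submodule_def by blast
  then show ?thesis using neg_unique assms(2,3) unfolding submodule_def by (metis subsetD)
qed

lemma submodule_msum:
  assumes "right_module R M" "submodule R M A" "submodule R M B"
  shows "submodule R M (msum M A B)"
proof -
  interpret rmodule R M by (rule rmodule.intro) fact
  have AM: "A \<subseteq> mcar M" and BM: "B \<subseteq> mcar M" using assms unfolding submodule_def by blast+
  have A: "mzero M \<in> A" "\<And>x y. x \<in> A \<Longrightarrow> y \<in> A \<Longrightarrow> madd M x y \<in> A"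
    "\<And>x r. x \<in> A \<Longrightarrow> r \<in> carrier R \<Longrightarrow> mact M x r \<in> A"
    using assms(2) unfolding submodule_def by blast+
  have B: "mzero M \<in> B" "\<And>x y. x \<in> B \<Longrightarrow> y \<in> B \<Longrightarrow> madd M x y \<in> B"
    "\<And>x r. x \<in> B \<Longrightarrow> r \<in> carrier R \<Longrightarrow> mact M x r \<in> B"
    using assms(3) unfolding submodule_def by blast+
  show ?thesis unfolding submodule_def
  proof (intro conjI ballI)
    show "msum M A B \<subseteq> mcar M" using AM BM unfolding msum_def by (auto intro: add_closed)
    show "mzero M \<in> msum M A B" using A B unfolding msum_def by force
  next
    fix x y assume "x \<in> msum M A B" "y \<in> msum M A B"
    then obtain a1 b1 a2 b2 where "x = madd M a1 b1" "y = madd M a2 b2"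
      and "a1 \<in> A" "a2 \<in> A" "b1 \<in> B" "b2 \<in> B"
      unfolding msum_def by blast
    moreover from this have "madd M x y = madd M (madd M a1 a2) (madd M b1 b2)"
      using add_swap[of a1 b1 a2 b2] AM BM by auto
    ultimately show "madd M x y \<in> msum M A B" using A(2) B(2) unfolding msum_def by blast
  next
    fix x assume "x \<in> msum M A B"
    then obtain a b where ab: "x = madd M a b" "a \<in> A" "b \<in> B" unfolding msum_def by blast
    have "madd M x (madd M (mneg M a) (mneg M b)) = mzero M"
      using ab AM BM add_swap[of a b "mneg M a" "mneg M b"] by auto
    moreover have "madd M (mneg M a) (mneg M b) \<in> msum M A B"
      using ab submodule_neg_closed[OF assms(1,2)] submodule_neg_closed[OF assms(1,3)]
      unfolding msum_def by blast
    ultimately show "\<exists>y\<in>msum M A B. madd M x y = mzero M" by blast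
  next
    fix x r assume "x \<in> msum M A B" "r \<in> carrier R"
    then obtain a b where ab: "x = madd M a b" "a \<in> A" "b \<in> B" unfolding msum_def by blast
    have "mact M x r = madd M (mact M a r) (mact M b r)"
      unfolding ab(1) using ab(2,3) AM BM \<open>r \<in> carrier R\<close> by (intro act_add) auto
    then show "mact M x r \<in> msum M A B"
      using ab A(3) B(3) \<open>r \<in> carrier R\<close> unfolding msum_def by blast
  qed
qed

section \<open>Finite direct sums\<close>

lemma right_module_dsum:
  assumes "right_module R M"
  shows "right_module R (dsum M n)"
proof -
  interpret rmodule R M by (rule rmodule.intro) fact
  have neg: "\<exists>y\<in>mcar (dsum M n). madd (dsum M n) x y = mzero (dsum M n)" if "x \<in> mcar (dsum M n)" for x
    by (rule bexI[where x = "\<lambda>i. if i < n then mneg M (x i) else mzero M"])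
      (use that in \<open>auto simp: dsum_def\<close>)
  have ring: "ring R" using right_module unfolding right_module_def by blast
  show ?thesis
    unfolding right_module_def using ring neg
    by (simp add: dsum_def fun_eq_iff)
      (use right_module in \<open>simp add: right_module_def add_assoc add_commute act_add\<close>)
qed

lemma dsum_component: "x \<in> mcar (dsum M k) \<Longrightarrow> i < k \<Longrightarrow> x i \<in> mcar M"
  by (simp add: dsum_def)

lemma msum_below_dsum:
  "msum_below (dsum M n) k f j = (if j < n then msum_below M k (\<lambda>i. f i j) else mzero M)"
  by (induction k) (auto simp: dsum_def)

definition dsum_inj :: "('m, 'r, 'b) rmod_scheme \<Rightarrow> nat \<Rightarrow> 'm \<Rightarrow> nat \<Rightarrow> 'm" where
  "dsum_inj M i m = (\<lambda>j. if j = i then m else mzero M)"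

lemma rhom_dsum_inj:
  assumes "right_module R M" "i < k"
  shows "rhom R M (dsum M k) (dsum_inj M i)"
proof -
  interpret rmodule R M by (rule rmodule.intro) fact
  show ?thesis using assms(2) unfolding rhom_def dsum_inj_def dsum_def by (auto simp: fun_eq_iff)
qed

lemma dsum_sum_inj:
  assumes "right_module R M" "x \<in> mcar (dsum M k)"
  shows "msum_below (dsum M k) k (\<lambda>i. dsum_inj M i (x i)) = x"
proof
  interpret rmodule R M by (rule rmodule.intro) fact
  fix j
  have "msum_below M k (\<lambda>i. dsum_inj M i (x i) j) = msum_below M k (\<lambda>i. if j = i then x j else mzero M)"
    by (rule msum_below_cong) (simp add: dsum_inj_def)
  then show "msum_below (dsum M k) k (\<lambda>i. dsum_inj M i (x i)) j = x j"
    unfolding msum_below_dsum using assms(2) msum_below_single[of "x j" k j] by (auto simp: dsum_def)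
qed

lemma rhom_dsum_expand:
  assumes "right_module R M" "right_module R Y" "rhom R (dsum M k) Y h" "x \<in> mcar (dsum M k)"
  shows "h x = msum_below Y k (\<lambda>i. h (dsum_inj M i (x i)))"
proof -
  have "h x = h (msum_below (dsum M k) k (\<lambda>i. dsum_inj M i (x i)))"
    using dsum_sum_inj[OF assms(1,4)] by simp
  also have "\<dots> = msum_below Y k (\<lambda>i. h (dsum_inj M i (x i)))"
    using assms(4) rhom_closed[OF rhom_dsum_inj[OF assms(1)]] dsum_component
    by (intro rhom_msum_below[OF right_module_dsum[OF assms(1)] assms(2,3)]) blast
  finally show ?thesis .
qed

definition dsum_take :: "('m, 'r, 'b) rmod_scheme \<Rightarrow> nat \<Rightarrow> (nat \<Rightarrow> 'm) \<Rightarrow> nat \<Rightarrow> 'm" where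
  "dsum_take M a x = (\<lambda>i. if i < a then x i else mzero M)"

definition dsum_drop :: "nat \<Rightarrow> (nat \<Rightarrow> 'm) \<Rightarrow> nat \<Rightarrow> 'm" where
  "dsum_drop a x = (\<lambda>i. x (a + i))"

definition dsum_join :: "nat \<Rightarrow> (nat \<Rightarrow> 'm) \<Rightarrow> (nat \<Rightarrow> 'm) \<Rightarrow> nat \<Rightarrow> 'm" where
  "dsum_join a u v = (\<lambda>i. if i < a then u i else v (i - a))"

lemma rhom_dsum_take: "rhom R (dsum M (a + b)) (dsum M a) (dsum_take M a)"
  unfolding rhom_def dsum_take_def dsum_def by (auto simp: fun_eq_iff)

lemma rhom_dsum_drop: "rhom R (dsum M (a + b)) (dsum M b) (dsum_drop a)"
  unfolding rhom_def dsum_drop_def dsum_def by (auto simp: fun_eq_iff)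

lemma dsum_take_closed: "x \<in> mcar (dsum M (a + b)) \<Longrightarrow> dsum_take M a x \<in> mcar (dsum M a)"
  using rhom_closed[OF rhom_dsum_take] by metis

lemma dsum_drop_closed: "x \<in> mcar (dsum M (a + b)) \<Longrightarrow> dsum_drop a x \<in> mcar (dsum M b)"
  using rhom_closed[OF rhom_dsum_drop] by metis

lemma dsum_join_closed:
  "u \<in> mcar (dsum M a) \<Longrightarrow> v \<in> mcar (dsum M b) \<Longrightarrow> dsum_join a u v \<in> mcar (dsum M (a + b))"
  unfolding dsum_join_def dsum_def by auto

lemma dsum_take_join [simp]: "u \<in> mcar (dsum M a) \<Longrightarrow> dsum_take M a (dsum_join a u v) = u"
  unfolding dsum_take_def dsum_join_def dsum_def by (auto simp: fun_eq_iff)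

lemma dsum_drop_join [simp]: "dsum_drop a (dsum_join a u v) = v"
  unfolding dsum_drop_def dsum_join_def by (auto simp: fun_eq_iff)

lemma dsum_join_take_drop: "x \<in> mcar (dsum M (a + b)) \<Longrightarrow> dsum_join a (dsum_take M a x) (dsum_drop a x) = x"
  unfolding dsum_take_def dsum_join_def dsum_drop_def by (auto simp: fun_eq_iff)

lemma dsum_join_add:
  "madd (dsum M (a + b)) (dsum_join a u v) (dsum_join a u' v') =
   dsum_join a (madd (dsum M a) u u') (madd (dsum M b) v v')"
  unfolding dsum_join_def dsum_def by (auto simp: fun_eq_iff)

lemma rhom_dsum_join:
  assumes "rhom R X (dsum M a) f" "rhom R X (dsum M b) g"
  shows "rhom R X (dsum M (a + b)) (\<lambda>x. dsum_join a (f x) (g x))"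
  unfolding rhom_def
proof (intro conjI ballI)
  fix x assume "x \<in> mcar X"
  then show "dsum_join a (f x) (g x) \<in> mcar (dsum M (a + b))"
    using dsum_join_closed rhom_closed assms by metis
next
  fix x y assume "x \<in> mcar X" "y \<in> mcar X"
  then show "dsum_join a (f (madd X x y)) (g (madd X x y)) =
             madd (dsum M (a + b)) (dsum_join a (f x) (g x)) (dsum_join a (f y) (g y))"
    using rhom_add[OF assms(1)] rhom_add[OF assms(2)] by (simp add: dsum_join_add)
next
  fix x r assume x: "x \<in> mcar X" and r: "r \<in> carrier R"
  have "f x \<in> mcar (dsum M a)" "g x \<in> mcar (dsum M b)" using rhom_closed assms x by metis+
  then show "dsum_join a (f (mact X x r)) (g (mact X x r)) = mact (dsum M (a + b)) (dsum_join a (f x) (g x)) r"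
    using rhom_act[OF assms(1) x r] rhom_act[OF assms(2) x r]
    by (auto simp: dsum_join_def dsum_def fun_eq_iff)
qed

definition dsum_copair ::
    "('n, 'r, 'c) rmod_scheme \<Rightarrow> ('m, 'r, 'b) rmod_scheme \<Rightarrow> nat \<Rightarrow>
     ((nat \<Rightarrow> 'm) \<Rightarrow> 'n) \<Rightarrow> ((nat \<Rightarrow> 'm) \<Rightarrow> 'n) \<Rightarrow> (nat \<Rightarrow> 'm) \<Rightarrow> 'n" where
  "dsum_copair Y M a f g = (\<lambda>x. madd Y (f (dsum_take M a x)) (g (dsum_drop a x)))"

lemma rhom_dsum_copair:
  assumes "right_module R Y" "rhom R (dsum M a) Y f" "rhom R (dsum M b) Y g"
  shows "rhom R (dsum M (a + b)) Y (dsum_copair Y M a f g)"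
  unfolding dsum_copair_def
  by (rule rhom_add_fun[OF assms(1) rhom_comp[OF rhom_dsum_take assms(2)] rhom_comp[OF rhom_dsum_drop assms(3)]])

lemma dsum_copair_join [simp]:
  "u \<in> mcar (dsum M a) \<Longrightarrow> dsum_copair Y M a f g (dsum_join a u v) = madd Y (f u) (g v)"
  by (simp add: dsum_copair_def)

lemma dsum_copair_image:
   "dsum_copair Y M a f g ` mcar (dsum M (a + b)) = msum Y (f ` mcar (dsum M a)) (g ` mcar (dsum M b))"
proof
  show "dsum_copair Y M a f g ` mcar (dsum M (a + b)) \<subseteq> msum Y (f ` mcar (dsum M a)) (g ` mcar (dsum M b))"
    unfolding dsum_copair_def msum_def using dsum_take_closed dsum_drop_closed by blast
  show "msum Y (f ` mcar (dsum M a)) (g ` mcar (dsum M b)) \<subseteq> dsum_copair Y M a f g ` mcar (dsum M (a + b))"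
    unfolding msum_def using dsum_join_closed dsum_copair_join by (smt (verit) image_iff mem_Collect_eq subsetI)
qed

lemma fin_M_generated_submod_iff:
  assumes "K \<subseteq> mcar X"
  shows "fin_M_generated R M (submod X K) \<longleftrightarrow>
    (\<exists>n>0. \<exists>\<theta>. rhom R (dsum M n) X \<theta> \<and> \<theta> ` mcar (dsum M n) = K)"
  using repi_submod_iff[OF assms] unfolding fin_M_generated_def by blast

lemma fin_M_presented_iff_kernel:
  "fin_M_presented R M N \<longleftrightarrow>
     (\<exists>n>0. \<exists>\<alpha>. repi R (dsum M n) N \<alpha> \<and> fin_M_generated R M (submod (dsum M n) (rkernel (dsum M n) N \<alpha>)))"
  unfolding fin_M_presented_def
  by (subst fin_M_generated_submod_iff) (auto simp: rkernel_def)

lemma fin_M_generated_dsum: "n > 0 \<Longrightarrow> fin_M_generated R M (submod (dsum M n) (mcar (dsum M n)))"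
  unfolding fin_M_generated_submod_iff[OF order_refl] using rhom_id by blast

lemma fin_M_generated_image:
  assumes "fin_M_generated R M (submod X K)" "K \<subseteq> mcar X" "rhom R X Y f"
  shows "fin_M_generated R M (submod Y (f ` K))"
proof -
  obtain n \<theta> where n: "n > 0" and \<theta>: "rhom R (dsum M n) X \<theta>" "\<theta> ` mcar (dsum M n) = K"
    using assms(1) unfolding fin_M_generated_submod_iff[OF assms(2)] by blast
  have "f ` K \<subseteq> mcar Y" using assms(2) rhom_closed[OF assms(3)] by blast
  moreover have "(\<lambda>x. f (\<theta> x)) ` mcar (dsum M n) = f ` K" unfolding \<theta>(2)[symmetric] by (rule image_image[symmetric])
  ultimately show ?thesis
    unfolding fin_M_generated_submod_iff[OF \<open>f ` K \<subseteq> mcar Y\<close>]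
    using n rhom_comp[OF \<theta>(1) assms(3)] by blast
qed

lemma fin_M_generated_msum:
  assumes "right_module R Y" "K \<subseteq> mcar Y" "L \<subseteq> mcar Y"
    and "fin_M_generated R M (submod Y K)" "fin_M_generated R M (submod Y L)"
  shows "fin_M_generated R M (submod Y (msum Y K L))"
proof -
  obtain a f where a: "a > 0" "rhom R (dsum M a) Y f" "f ` mcar (dsum M a) = K"
    using assms(4) unfolding fin_M_generated_submod_iff[OF assms(2)] by blast
  obtain b g where b: "b > 0" "rhom R (dsum M b) Y g" "g ` mcar (dsum M b) = L"
    using assms(5) unfolding fin_M_generated_submod_iff[OF assms(3)] by blast
  have sub: "msum Y K L \<subseteq> mcar Y"
    using assms(2,3) rmodule.add_closed[OF rmodule.intro[OF assms(1)]] unfolding msum_def by blast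
  have "dsum_copair Y M a f g ` mcar (dsum M (a + b)) = msum Y K L"
    using dsum_copair_image a(3) b(3) by metis
  then show ?thesis
    unfolding fin_M_generated_submod_iff[OF sub]
    using a(1) rhom_dsum_copair[OF assms(1) a(2) b(2)] by blast
qed

section \<open>Lifting along epimorphisms\<close>

definition dsum_glue :: "('n, 'r, 'c) rmod_scheme \<Rightarrow> nat \<Rightarrow> (nat \<Rightarrow> 'm \<Rightarrow> 'n) \<Rightarrow> (nat \<Rightarrow> 'm) \<Rightarrow> 'n" where
  "dsum_glue Y k G x = msum_below Y k (\<lambda>i. G i (x i))"

lemma rhom_dsum_glue:
  assumes "right_module R Y" "\<And>i. i < k \<Longrightarrow> rhom R M Y (G i)"
  shows "rhom R (dsum M k) Y (dsum_glue Y k G)"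
  unfolding rhom_def
proof (intro conjI ballI)
  interpret rmodule R Y by (rule rmodule.intro) fact
  have c: "x \<in> mcar (dsum M k) \<Longrightarrow> i < k \<Longrightarrow> G i (x i) \<in> mcar Y" for x i
    using rhom_closed[OF assms(2)] dsum_component by blast
  {
    fix x assume "x \<in> mcar (dsum M k)"
    then show "dsum_glue Y k G x \<in> mcar Y" unfolding dsum_glue_def using c by simp
  next
    fix x y assume x: "x \<in> mcar (dsum M k)" and y: "y \<in> mcar (dsum M k)"
    have "dsum_glue Y k G (madd (dsum M k) x y) = msum_below Y k (\<lambda>i. madd Y (G i (x i)) (G i (y i)))"
      unfolding dsum_glue_def using x y dsum_component
      by (intro msum_below_cong) (simp add: dsum_def rhom_add[OF assms(2)])
    then show "dsum_glue Y k G (madd (dsum M k) x y) = madd Y (dsum_glue Y k G x) (dsum_glue Y k G y)"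
      unfolding dsum_glue_def using x y c by (simp add: msum_below_add)
  next
    fix x r assume x: "x \<in> mcar (dsum M k)" and r: "r \<in> carrier R"
    have "dsum_glue Y k G (mact (dsum M k) x r) = msum_below Y k (\<lambda>i. mact Y (G i (x i)) r)"
      unfolding dsum_glue_def using x r dsum_component
      by (intro msum_below_cong) (simp add: dsum_def rhom_act[OF assms(2)])
    then show "dsum_glue Y k G (mact (dsum M k) x r) = mact Y (dsum_glue Y k G x) r"
      unfolding dsum_glue_def using x r c by (simp add: msum_below_act)
  }
qed

lemma intrinsically_projective_lift:
  assumes M: "right_module R M" and proj: "intrinsically_projective R M" and N: "submodule R M N"
    and n: "n > 0" and \<alpha>: "repi R (dsum M n) (submod M N) \<alpha>"
    and h: "rhom R (dsum M k) M h" "h ` mcar (dsum M k) \<subseteq> N"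
  shows "\<exists>\<gamma>. rhom R (dsum M k) (dsum M n) \<gamma> \<and> (\<forall>x\<in>mcar (dsum M k). \<alpha> (\<gamma> x) = h x)"
proof -
  have NM: "N \<subseteq> mcar M" using N unfolding submodule_def by blast
  have "\<exists>g. rhom R M (dsum M n) g \<and> (\<forall>m\<in>mcar M. \<alpha> (g m) = h (dsum_inj M i m))" if i: "i < k" for i
  proof -
    note inj = rhom_dsum_inj[OF M i]
    have "rhom R M (submod M N) (\<lambda>m. h (dsum_inj M i m))"
      unfolding rhom_submod_iff[OF NM] using rhom_comp[OF inj h(1)] rhom_closed[OF inj] h(2) by blast
    then show ?thesis using proj n N \<alpha> unfolding intrinsically_projective_def by blast
  qed
  then obtain G where G: "\<And>i. i < k \<Longrightarrow> rhom R M (dsum M n) (G i)"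
    "\<And>i m. i < k \<Longrightarrow> m \<in> mcar M \<Longrightarrow> \<alpha> (G i m) = h (dsum_inj M i m)"
    by metis
  have \<alpha>M: "rhom R (dsum M n) M \<alpha>" using \<alpha> repi_submod_iff[OF NM] by blast
  have "\<alpha> (dsum_glue (dsum M n) k G x) = h x" if x: "x \<in> mcar (dsum M k)" for x
  proof -
    have "\<alpha> (dsum_glue (dsum M n) k G x) = msum_below M k (\<lambda>i. \<alpha> (G i (x i)))"
      unfolding dsum_glue_def using x rhom_closed[OF G(1)] dsum_component
      by (intro rhom_msum_below[OF right_module_dsum[OF M] M \<alpha>M]) blast
    also have "\<dots> = msum_below M k (\<lambda>i. h (dsum_inj M i (x i)))"
      using x G(2) dsum_component by (intro msum_below_cong) blast
    also have "\<dots> = h x" using rhom_dsum_expand[OF M M h(1) x] by simp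
    finally show ?thesis .
  qed
  moreover have "rhom R (dsum M k) (dsum M n) (dsum_glue (dsum M n) k G)"
    using rhom_dsum_glue[OF right_module_dsum[OF M]] G(1) by blast
  ultimately show ?thesis by blast
qed

lemma rkernel_eq_msum_of_lifts:
  assumes X: "right_module R X" and Y: "right_module R Y" and Z: "right_module R Z"
    and \<pi>: "rhom R X Z \<pi>" and \<alpha>: "rhom R Y Z \<alpha>" and \<phi>: "rhom R X Y \<phi>" and \<psi>: "rhom R Y X \<psi>"
    and \<alpha>\<phi>: "\<And>x. x \<in> mcar X \<Longrightarrow> \<alpha> (\<phi> x) = \<pi> x"
    and \<pi>\<psi>: "\<And>y. y \<in> mcar Y \<Longrightarrow> \<pi> (\<psi> y) = \<alpha> y"
  shows "rkernel X Z \<pi> =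
    msum X ((\<lambda>x. madd X x (mneg X (\<psi> (\<phi> x)))) ` mcar X) (\<psi> ` rkernel Y Z \<alpha>)"
proof -
  interpret X: rmodule R X by (rule rmodule.intro) fact
  interpret Z: rmodule R Z by (rule rmodule.intro) fact
  have c: "x \<in> mcar X \<Longrightarrow> \<psi> (\<phi> x) \<in> mcar X" for x using rhom_closed[OF rhom_comp[OF \<phi> \<psi>]] .
  show ?thesis
  proof
    show "rkernel X Z \<pi> \<subseteq> msum X ((\<lambda>x. madd X x (mneg X (\<psi> (\<phi> x)))) ` mcar X) (\<psi> ` rkernel Y Z \<alpha>)"
    proof
      fix x assume "x \<in> rkernel X Z \<pi>"
      then have x: "x \<in> mcar X" "\<pi> x = mzero Z" by (auto simp: rkernel_def)
      then have "\<phi> x \<in> rkernel Y Z \<alpha>" using rhom_closed[OF \<phi>] \<alpha>\<phi> by (simp add: rkernel_def)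
      moreover have "x = madd X (madd X x (mneg X (\<psi> (\<phi> x)))) (\<psi> (\<phi> x))" using x c by simp
      ultimately show "x \<in> msum X ((\<lambda>x. madd X x (mneg X (\<psi> (\<phi> x)))) ` mcar X) (\<psi> ` rkernel Y Z \<alpha>)"
        unfolding msum_def using x by blast
    qed
    show "msum X ((\<lambda>x. madd X x (mneg X (\<psi> (\<phi> x)))) ` mcar X) (\<psi> ` rkernel Y Z \<alpha>) \<subseteq> rkernel X Z \<pi>"
    proof
      fix z assume "z \<in> msum X ((\<lambda>x. madd X x (mneg X (\<psi> (\<phi> x)))) ` mcar X) (\<psi> ` rkernel Y Z \<alpha>)"
      then obtain x y where x: "x \<in> mcar X" and y: "y \<in> mcar Y" "\<alpha> y = mzero Z"
        and z: "z = madd X (madd X x (mneg X (\<psi> (\<phi> x)))) (\<psi> y)"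
        unfolding msum_def rkernel_def by blast
      have \<psi>y: "\<psi> y \<in> mcar X" using rhom_closed[OF \<psi> y(1)] .
      have "\<pi> z = madd Z (madd Z (\<pi> x) (mneg Z (\<pi> x))) (\<alpha> y)"
        using x y \<psi>y c rhom_closed[OF \<phi> x] rhom_closed[OF \<pi> x]
        by (simp add: z rhom_add[OF \<pi>] rhom_neg[OF X Z \<pi>] \<alpha>\<phi> \<pi>\<psi>)
      then have "\<pi> z = mzero Z" using x y(2) rhom_closed[OF \<pi> x] by simp
      moreover have "z \<in> mcar X" using z x c \<psi>y by simp
      ultimately show "z \<in> rkernel X Z \<pi>" by (simp add: rkernel_def)
    qed
  qed
qed

lemma fin_M_generated_kernel_of_presented:
  assumes M: "right_module R M" and proj: "intrinsically_projective R M" and S: "submodule R M S"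
    and pres: "fin_M_presented R M (submod M S)"
    and m: "m > 0" and \<pi>: "repi R (dsum M m) (submod M S) \<pi>"
  shows "fin_M_generated R M (submod (dsum M m) (rkernel (dsum M m) M \<pi>))"
proof -
  obtain n \<alpha> where n: "n > 0" and \<alpha>: "repi R (dsum M n) (submod M S) \<alpha>"
    and ker\<alpha>: "fin_M_generated R M (submod (dsum M n) (rkernel (dsum M n) M \<alpha>))"
    using pres unfolding fin_M_presented_iff_kernel rkernel_submod by blast
  have \<pi>M: "rhom R (dsum M m) M \<pi>" "\<pi> ` mcar (dsum M m) = S" using repi_submodD[OF S \<pi>] by auto
  have \<alpha>M: "rhom R (dsum M n) M \<alpha>" "\<alpha> ` mcar (dsum M n) = S" using repi_submodD[OF S \<alpha>] by auto
  obtain \<phi> where \<phi>: "rhom R (dsum M m) (dsum M n) \<phi>" "\<forall>x\<in>mcar (dsum M m). \<alpha> (\<phi> x) = \<pi> x"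
    using intrinsically_projective_lift[OF M proj S n \<alpha> \<pi>M(1)] \<pi>M(2) by blast
  obtain \<psi> where \<psi>: "rhom R (dsum M n) (dsum M m) \<psi>" "\<forall>y\<in>mcar (dsum M n). \<pi> (\<psi> y) = \<alpha> y"
    using intrinsically_projective_lift[OF M proj S m \<pi> \<alpha>M(1)] \<alpha>M(2) by blast
  note Dm = right_module_dsum[OF M, of m] and Dn = right_module_dsum[OF M, of n]
  define \<kappa> where "\<kappa> x = madd (dsum M m) x (mneg (dsum M m) (\<psi> (\<phi> x)))" for x
  have \<kappa>: "rhom R (dsum M m) (dsum M m) \<kappa>"
    unfolding \<kappa>_def by (rule rhom_add_fun[OF Dm rhom_id rhom_neg_fun[OF Dm rhom_comp[OF \<phi>(1) \<psi>(1)]]])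
  have ker\<alpha>M: "rkernel (dsum M n) M \<alpha> \<subseteq> mcar (dsum M n)" by (auto simp: rkernel_def)
  have "rkernel (dsum M m) M \<pi> = msum (dsum M m) (\<kappa> ` mcar (dsum M m)) (\<psi> ` rkernel (dsum M n) M \<alpha>)"
    unfolding \<kappa>_def
    by (rule rkernel_eq_msum_of_lifts[OF Dm Dn M \<pi>M(1) \<alpha>M(1) \<phi>(1) \<psi>(1)])
      (simp_all add: \<phi>(2) \<psi>(2))
  moreover have "fin_M_generated R M (submod (dsum M m) (\<kappa> ` mcar (dsum M m)))"
    by (rule fin_M_generated_image[OF fin_M_generated_dsum[OF m] order_refl \<kappa>])
  moreover have "fin_M_generated R M (submod (dsum M m) (\<psi> ` rkernel (dsum M n) M \<alpha>))"
    by (rule fin_M_generated_image[OF ker\<alpha> ker\<alpha>M \<psi>(1)])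
  moreover have "\<kappa> ` mcar (dsum M m) \<subseteq> mcar (dsum M m)" "\<psi> ` rkernel (dsum M n) M \<alpha> \<subseteq> mcar (dsum M m)"
    using rhom_closed[OF \<kappa>] rhom_closed[OF \<psi>(1)] ker\<alpha>M by blast+
  ultimately show ?thesis using fin_M_generated_msum[OF Dm] by metis
qed

section \<open>Sums and intersections of presented submodules\<close>

lemma repi_dsum_copair_msum:
  assumes M: "right_module R M" and A: "submodule R M A" and B: "submodule R M B"
    and \<alpha>A: "repi R (dsum M a) (submod M A) \<alpha>A" and \<alpha>B: "repi R (dsum M b) (submod M B) \<alpha>B"
  shows "repi R (dsum M (a + b)) (submod M (msum M A B)) (dsum_copair M M a \<alpha>A \<alpha>B)"
proof -
  have S: "msum M A B \<subseteq> mcar M" using submodule_msum[OF M A B] unfolding submodule_def by blast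
  have \<alpha>A': "rhom R (dsum M a) M \<alpha>A" "\<alpha>A ` mcar (dsum M a) = A" using repi_submodD[OF A \<alpha>A] by auto
  have \<alpha>B': "rhom R (dsum M b) M \<alpha>B" "\<alpha>B ` mcar (dsum M b) = B" using repi_submodD[OF B \<alpha>B] by auto
  show ?thesis
    unfolding repi_submod_iff[OF S] dsum_copair_image \<alpha>A'(2) \<alpha>B'(2)
    using rhom_dsum_copair[OF M \<alpha>A'(1) \<alpha>B'(1)] by simp
qed

lemma fin_M_generated_dsum_join:
  assumes "K \<subseteq> mcar (dsum M a)" "L \<subseteq> mcar (dsum M b)"
    and "fin_M_generated R M (submod (dsum M a) K)" "fin_M_generated R M (submod (dsum M b) L)"
  shows "fin_M_generated R M (submod (dsum M (a + b)) {dsum_join a x y | x y. x \<in> K \<and> y \<in> L})"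
proof -
  obtain p f where p: "p > 0" "rhom R (dsum M p) (dsum M a) f" "f ` mcar (dsum M p) = K"
    using assms(3) unfolding fin_M_generated_submod_iff[OF assms(1)] by blast
  obtain q g where q: "q > 0" "rhom R (dsum M q) (dsum M b) g" "g ` mcar (dsum M q) = L"
    using assms(4) unfolding fin_M_generated_submod_iff[OF assms(2)] by blast
  define h where "h z = dsum_join a (f (dsum_take M p z)) (g (dsum_drop p z))" for z
  have h: "rhom R (dsum M (p + q)) (dsum M (a + b)) h"
    unfolding h_def
    by (rule rhom_dsum_join[OF rhom_comp[OF rhom_dsum_take p(2)] rhom_comp[OF rhom_dsum_drop q(2)]])
  have img: "h ` mcar (dsum M (p + q)) = {dsum_join a x y | x y. x \<in> K \<and> y \<in> L}"
  proof
    show "h ` mcar (dsum M (p + q)) \<subseteq> {dsum_join a x y | x y. x \<in> K \<and> y \<in> L}"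
      unfolding h_def using p(3) q(3) dsum_take_closed dsum_drop_closed by blast
    show "{dsum_join a x y | x y. x \<in> K \<and> y \<in> L} \<subseteq> h ` mcar (dsum M (p + q))"
    proof clarify
      fix x y assume "x \<in> K" "y \<in> L"
      then obtain u v where u: "u \<in> mcar (dsum M p)" "f u = x" and v: "v \<in> mcar (dsum M q)" "g v = y"
        using p(3) q(3) by blast
      then have "h (dsum_join p u v) = dsum_join a x y" by (simp add: h_def)
      then show "dsum_join a x y \<in> h ` mcar (dsum M (p + q))"
        using dsum_join_closed[OF u(1) v(1)] by (metis image_eqI)
    qed
  qed
  have sub: "{dsum_join a x y | x y. x \<in> K \<and> y \<in> L} \<subseteq> mcar (dsum M (a + b))"
    using assms(1,2) dsum_join_closed by blast
  show ?thesis
    unfolding fin_M_generated_submod_iff[OF sub] using h img p(1) by blast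
qed

lemma rkernel_dsum_copair_iff:
  "x \<in> mcar (dsum M a) \<Longrightarrow> y \<in> mcar (dsum M b) \<Longrightarrow>
   dsum_join a x y \<in> rkernel (dsum M (a + b)) Y (dsum_copair Y M a f g) \<longleftrightarrow> madd Y (f x) (g y) = mzero Y"
  by (simp add: rkernel_def dsum_join_closed)

lemma dsum_copair_kernel_image:
  assumes M: "right_module R M" and B: "submodule R M B"
    and \<alpha>A: "rhom R (dsum M a) M \<alpha>A" "\<alpha>A ` mcar (dsum M a) = A"
    and \<alpha>B: "rhom R (dsum M b) M \<alpha>B" "\<alpha>B ` mcar (dsum M b) = B"
  shows "(\<lambda>z. \<alpha>A (dsum_take M a z)) ` rkernel (dsum M (a + b)) M (dsum_copair M M a \<alpha>A \<alpha>B) = A \<inter> B"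
proof
  interpret rmodule R M by (rule rmodule.intro) fact
  show "(\<lambda>z. \<alpha>A (dsum_take M a z)) ` rkernel (dsum M (a + b)) M (dsum_copair M M a \<alpha>A \<alpha>B) \<subseteq> A \<inter> B"
  proof clarify
    fix z assume "z \<in> rkernel (dsum M (a + b)) M (dsum_copair M M a \<alpha>A \<alpha>B)"
    then have z: "z \<in> mcar (dsum M (a + b))"
      and sum0: "madd M (\<alpha>A (dsum_take M a z)) (\<alpha>B (dsum_drop a z)) = mzero M"
      by (simp_all add: rkernel_def dsum_copair_def)
    have p: "\<alpha>A (dsum_take M a z) \<in> A" using \<alpha>A(2) dsum_take_closed[OF z] by blast
    have q: "\<alpha>B (dsum_drop a z) \<in> B" using \<alpha>B(2) dsum_drop_closed[OF z] by blast
    have "mneg M (\<alpha>B (dsum_drop a z)) = \<alpha>A (dsum_take M a z)"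
      using neg_eq_of_add_eq_zero[OF _ _ sum0] rhom_closed[OF \<alpha>A(1) dsum_take_closed[OF z]]
        rhom_closed[OF \<alpha>B(1) dsum_drop_closed[OF z]] by blast
    then show "\<alpha>A (dsum_take M a z) \<in> A \<inter> B" using p submodule_neg_closed[OF M B q] by simp
  qed
  show "A \<inter> B \<subseteq> (\<lambda>z. \<alpha>A (dsum_take M a z)) ` rkernel (dsum M (a + b)) M (dsum_copair M M a \<alpha>A \<alpha>B)"
  proof
    fix w assume w: "w \<in> A \<inter> B"
    obtain x where x: "x \<in> mcar (dsum M a)" "\<alpha>A x = w" using \<alpha>A(2) w by blast
    obtain y where y: "y \<in> mcar (dsum M b)" "\<alpha>B y = mneg M w"
      using \<alpha>B(2) submodule_neg_closed[OF M B] w by (metis IntD2 imageE)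
    have "w \<in> mcar M" using rhom_closed[OF \<alpha>A(1) x(1)] x(2) by simp
    then have "dsum_join a x y \<in> rkernel (dsum M (a + b)) M (dsum_copair M M a \<alpha>A \<alpha>B)"
      using rkernel_dsum_copair_iff[OF x(1) y(1), where Y = M and f = \<alpha>A and g = \<alpha>B] x(2) y(2) by simp
    then show "w \<in> (\<lambda>z. \<alpha>A (dsum_take M a z)) ` rkernel (dsum M (a + b)) M (dsum_copair M M a \<alpha>A \<alpha>B)"
      using x by (metis dsum_take_join image_eqI)
  qed
qed

lemma rkernel_dsum_copair_subset:
  assumes M: "right_module R M" and B: "submodule R M B"
    and \<alpha>A: "rhom R (dsum M a) M \<alpha>A" "\<alpha>A ` mcar (dsum M a) = A"
    and \<alpha>B: "rhom R (dsum M b) M \<alpha>B" "\<alpha>B ` mcar (dsum M b) = B"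
    and \<delta>: "\<delta> ` mcar (dsum M c) = A \<inter> B"
    and \<gamma>: "rhom R (dsum M c) (dsum M a) \<gamma>" "\<forall>w\<in>mcar (dsum M c). \<alpha>A (\<gamma> w) = \<delta> w"
    and \<gamma>': "rhom R (dsum M c) (dsum M b) \<gamma>'" "\<forall>w\<in>mcar (dsum M c). \<alpha>B (\<gamma>' w) = \<delta> w"
  shows "rkernel (dsum M (a + b)) M (dsum_copair M M a \<alpha>A \<alpha>B) \<subseteq>
    msum (dsum M (a + b))
      {dsum_join a x y | x y. x \<in> rkernel (dsum M a) M \<alpha>A \<and> y \<in> rkernel (dsum M b) M \<alpha>B}
      ((\<lambda>w. dsum_join a (\<gamma> w) (mneg (dsum M b) (\<gamma>' w))) ` mcar (dsum M c))"
    (is "?K \<subseteq> msum _ ?P ?G")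
proof
  interpret rmodule R M by (rule rmodule.intro) fact
  interpret A: rmodule R "dsum M a" by (rule rmodule.intro) (rule right_module_dsum[OF M])
  interpret B: rmodule R "dsum M b" by (rule rmodule.intro) (rule right_module_dsum[OF M])
  have \<gamma>c: "w \<in> mcar (dsum M c) \<Longrightarrow> \<gamma> w \<in> mcar (dsum M a) \<and> \<gamma>' w \<in> mcar (dsum M b)" for w
    using rhom_closed[OF \<gamma>(1)] rhom_closed[OF \<gamma>'(1)] by blast
  fix z assume "z \<in> ?K"
  then have z: "z \<in> mcar (dsum M (a + b))" by (simp add: rkernel_def)
  define x y where "x = dsum_take M a z" and "y = dsum_drop a z"
  have x: "x \<in> mcar (dsum M a)" and y: "y \<in> mcar (dsum M b)"
    unfolding x_def y_def using dsum_take_closed[OF z] dsum_drop_closed[OF z] .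
  have xy: "z = dsum_join a x y" unfolding x_def y_def using dsum_join_take_drop[OF z] ..
  have p: "\<alpha>A x \<in> mcar M" and q: "\<alpha>B y \<in> mcar M"
    using rhom_closed[OF \<alpha>A(1) x] rhom_closed[OF \<alpha>B(1) y] .
  have sum0: "madd M (\<alpha>A x) (\<alpha>B y) = mzero M"
    using \<open>z \<in> ?K\<close> rkernel_dsum_copair_iff[OF x y, where Y = M and f = \<alpha>A and g = \<alpha>B] xy by simp
  have "\<alpha>A x = mneg M (\<alpha>B y)" using neg_eq_of_add_eq_zero[OF p q sum0] by simp
  moreover have "\<alpha>B y \<in> B" "\<alpha>A x \<in> A" using \<alpha>A(2) x \<alpha>B(2) y by blast+
  ultimately have "\<alpha>A x \<in> A \<inter> B" using submodule_neg_closed[OF M B] by simp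
  then obtain w where w: "w \<in> mcar (dsum M c)" "\<delta> w = \<alpha>A x" using \<delta> by (metis imageE)
  note wc = \<gamma>c[OF w(1)]
  define x' y' where "x' = madd (dsum M a) x (mneg (dsum M a) (\<gamma> w))" and "y' = madd (dsum M b) y (\<gamma>' w)"
  have "\<alpha>A x' = madd M (\<alpha>A x) (mneg M (\<alpha>A (\<gamma> w)))"
    unfolding x'_def using x wc
    by (simp add: rhom_add[OF \<alpha>A(1)] rhom_neg[OF right_module_dsum[OF M] M \<alpha>A(1)])
  then have x': "x' \<in> rkernel (dsum M a) M \<alpha>A"
    using x wc p bspec[OF \<gamma>(2) w(1)] w(2) by (simp add: x'_def rkernel_def)
  have "\<alpha>B y' = madd M (\<alpha>B y) (\<alpha>A x)"
    unfolding y'_def using y wc bspec[OF \<gamma>'(2) w(1)] w(2) by (simp add: rhom_add[OF \<alpha>B(1)])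
  then have y': "y' \<in> rkernel (dsum M b) M \<alpha>B"
    using y wc sum0 add_commute[OF p q] by (simp add: y'_def rkernel_def)
  have "z = madd (dsum M (a + b)) (dsum_join a x' y') (dsum_join a (\<gamma> w) (mneg (dsum M b) (\<gamma>' w)))"
    using x y \<gamma>c[OF w(1)] by (simp add: xy dsum_join_add x'_def y'_def)
  then show "z \<in> msum (dsum M (a + b)) ?P ?G" unfolding msum_def using x' y' w(1) by blast
qed

lemma msum_subset_rkernel_dsum_copair:
  assumes M: "right_module R M"
    and \<alpha>A: "rhom R (dsum M a) M \<alpha>A" and \<alpha>B: "rhom R (dsum M b) M \<alpha>B"
    and \<gamma>: "rhom R (dsum M c) (dsum M a) \<gamma>" and \<gamma>': "rhom R (dsum M c) (dsum M b) \<gamma>'"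
    and \<gamma>\<gamma>': "\<forall>w\<in>mcar (dsum M c). \<alpha>A (\<gamma> w) = \<alpha>B (\<gamma>' w)"
  shows "msum (dsum M (a + b))
      {dsum_join a x y | x y. x \<in> rkernel (dsum M a) M \<alpha>A \<and> y \<in> rkernel (dsum M b) M \<alpha>B}
      ((\<lambda>w. dsum_join a (\<gamma> w) (mneg (dsum M b) (\<gamma>' w))) ` mcar (dsum M c)) \<subseteq>
    rkernel (dsum M (a + b)) M (dsum_copair M M a \<alpha>A \<alpha>B)"
    (is "msum _ ?P ?G \<subseteq> ?K")
proof
  interpret rmodule R M by (rule rmodule.intro) fact
  interpret A: rmodule R "dsum M a" by (rule rmodule.intro) (rule right_module_dsum[OF M])
  interpret B: rmodule R "dsum M b" by (rule rmodule.intro) (rule right_module_dsum[OF M])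
  fix z assume "z \<in> msum (dsum M (a + b)) ?P ?G"
  then obtain x y w where x: "x \<in> rkernel (dsum M a) M \<alpha>A" and y: "y \<in> rkernel (dsum M b) M \<alpha>B"
    and w: "w \<in> mcar (dsum M c)"
    and z: "z = madd (dsum M (a + b)) (dsum_join a x y) (dsum_join a (\<gamma> w) (mneg (dsum M b) (\<gamma>' w)))"
    unfolding msum_def by blast
  have xc: "x \<in> mcar (dsum M a)" "\<alpha>A x = mzero M" and yc: "y \<in> mcar (dsum M b)" "\<alpha>B y = mzero M"
    using x y by (simp_all add: rkernel_def)
  have z': "z = dsum_join a (madd (dsum M a) x (\<gamma> w)) (madd (dsum M b) y (mneg (dsum M b) (\<gamma>' w)))"
    by (simp add: z dsum_join_add)
  have "\<gamma> w \<in> mcar (dsum M a)" "\<gamma>' w \<in> mcar (dsum M b)"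
    using rhom_closed[OF \<gamma> w] rhom_closed[OF \<gamma>' w] .
  then show "z \<in> ?K"
    unfolding z' using xc yc rhom_closed[OF \<alpha>B] bspec[OF \<gamma>\<gamma>' w]
    by (simp add: rkernel_dsum_copair_iff rhom_add[OF \<alpha>A] rhom_add[OF \<alpha>B]
        rhom_neg[OF right_module_dsum[OF M] M \<alpha>B])
qed

lemma rkernel_dsum_copair_eq:
  assumes M: "right_module R M" and B: "submodule R M B"
    and \<alpha>A: "rhom R (dsum M a) M \<alpha>A" "\<alpha>A ` mcar (dsum M a) = A"
    and \<alpha>B: "rhom R (dsum M b) M \<alpha>B" "\<alpha>B ` mcar (dsum M b) = B"
    and \<delta>: "\<delta> ` mcar (dsum M c) = A \<inter> B"
    and \<gamma>: "rhom R (dsum M c) (dsum M a) \<gamma>" "\<forall>w\<in>mcar (dsum M c). \<alpha>A (\<gamma> w) = \<delta> w"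
    and \<gamma>': "rhom R (dsum M c) (dsum M b) \<gamma>'" "\<forall>w\<in>mcar (dsum M c). \<alpha>B (\<gamma>' w) = \<delta> w"
  shows "rkernel (dsum M (a + b)) M (dsum_copair M M a \<alpha>A \<alpha>B) =
    msum (dsum M (a + b))
      {dsum_join a x y | x y. x \<in> rkernel (dsum M a) M \<alpha>A \<and> y \<in> rkernel (dsum M b) M \<alpha>B}
      ((\<lambda>w. dsum_join a (\<gamma> w) (mneg (dsum M b) (\<gamma>' w))) ` mcar (dsum M c))"
  using rkernel_dsum_copair_subset[OF assms]
    msum_subset_rkernel_dsum_copair[OF M \<alpha>A(1) \<alpha>B(1) \<gamma>(1) \<gamma>'(1)] \<gamma>(2) \<gamma>'(2)
  by (intro equalityI) auto

lemma fin_M_generated_rkernel_dsum_copair: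
  assumes M: "right_module R M" and proj: "intrinsically_projective R M"
    and A: "submodule R M A" and B: "submodule R M B"
    and a: "a > 0" and \<alpha>A: "repi R (dsum M a) (submod M A) \<alpha>A"
    and kerA: "fin_M_generated R M (submod (dsum M a) (rkernel (dsum M a) M \<alpha>A))"
    and b: "b > 0" and \<alpha>B: "repi R (dsum M b) (submod M B) \<alpha>B"
    and kerB: "fin_M_generated R M (submod (dsum M b) (rkernel (dsum M b) M \<alpha>B))"
    and AB: "fin_M_generated R M (submod M (A \<inter> B))"
  shows "fin_M_generated R M (submod (dsum M (a + b)) (rkernel (dsum M (a + b)) M (dsum_copair M M a \<alpha>A \<alpha>B)))"
proof -
  have \<alpha>A': "rhom R (dsum M a) M \<alpha>A" "\<alpha>A ` mcar (dsum M a) = A" using repi_submodD[OF A \<alpha>A] by auto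
  have \<alpha>B': "rhom R (dsum M b) M \<alpha>B" "\<alpha>B ` mcar (dsum M b) = B" using repi_submodD[OF B \<alpha>B] by auto
  have ABM: "A \<inter> B \<subseteq> mcar M" using A unfolding submodule_def by blast
  obtain c \<delta> where c: "c > 0" and \<delta>: "rhom R (dsum M c) M \<delta>" "\<delta> ` mcar (dsum M c) = A \<inter> B"
    using AB unfolding fin_M_generated_submod_iff[OF ABM] by blast
  obtain \<gamma> where \<gamma>: "rhom R (dsum M c) (dsum M a) \<gamma>" "\<forall>w\<in>mcar (dsum M c). \<alpha>A (\<gamma> w) = \<delta> w"
    using intrinsically_projective_lift[OF M proj A a \<alpha>A \<delta>(1)] \<delta>(2) by blast
  obtain \<gamma>' where \<gamma>': "rhom R (dsum M c) (dsum M b) \<gamma>'" "\<forall>w\<in>mcar (dsum M c). \<alpha>B (\<gamma>' w) = \<delta> w"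
    using intrinsically_projective_lift[OF M proj B b \<alpha>B \<delta>(1)] \<delta>(2) by blast
  have \<Gamma>: "rhom R (dsum M c) (dsum M (a + b)) (\<lambda>w. dsum_join a (\<gamma> w) (mneg (dsum M b) (\<gamma>' w)))"
    by (rule rhom_dsum_join[OF \<gamma>(1) rhom_neg_fun[OF right_module_dsum[OF M] \<gamma>'(1)]])
  have kers: "rkernel (dsum M a) M \<alpha>A \<subseteq> mcar (dsum M a)" "rkernel (dsum M b) M \<alpha>B \<subseteq> mcar (dsum M b)"
    by (auto simp: rkernel_def)
  note eq = rkernel_dsum_copair_eq[OF M B \<alpha>A' \<alpha>B' \<delta>(2) \<gamma>(1) \<gamma>(2) \<gamma>'(1) \<gamma>'(2)]
  show ?thesis
    unfolding eq
  proof (rule fin_M_generated_msum[OF right_module_dsum[OF M]])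
    show "fin_M_generated R M (submod (dsum M (a + b))
      {dsum_join a x y | x y. x \<in> rkernel (dsum M a) M \<alpha>A \<and> y \<in> rkernel (dsum M b) M \<alpha>B})"
      by (rule fin_M_generated_dsum_join[OF kers kerA kerB])
    show "fin_M_generated R M (submod (dsum M (a + b))
      ((\<lambda>w. dsum_join a (\<gamma> w) (mneg (dsum M b) (\<gamma>' w))) ` mcar (dsum M c)))"
      by (rule fin_M_generated_image[OF fin_M_generated_dsum[OF c] order_refl \<Gamma>])
  qed (use kers dsum_join_closed rhom_closed[OF \<Gamma>] in blast)+
qed

lemma fin_M_generated_inter_of_rkernel_dsum_copair:
  assumes M: "right_module R M" and A: "submodule R M A" and B: "submodule R M B"
    and \<alpha>A: "repi R (dsum M a) (submod M A) \<alpha>A" and \<alpha>B: "repi R (dsum M b) (submod M B) \<alpha>B"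
    and ker: "fin_M_generated R M (submod (dsum M (a + b)) (rkernel (dsum M (a + b)) M (dsum_copair M M a \<alpha>A \<alpha>B)))"
  shows "fin_M_generated R M (submod M (A \<inter> B))"
proof -
  have \<alpha>A': "rhom R (dsum M a) M \<alpha>A" "\<alpha>A ` mcar (dsum M a) = A" using repi_submodD[OF A \<alpha>A] by auto
  have \<alpha>B': "rhom R (dsum M b) M \<alpha>B" "\<alpha>B ` mcar (dsum M b) = B" using repi_submodD[OF B \<alpha>B] by auto
  from fin_M_generated_image[OF ker _ rhom_comp[OF rhom_dsum_take \<alpha>A'(1)]]
  show ?thesis unfolding dsum_copair_kernel_image[OF M B \<alpha>A' \<alpha>B'] by (auto simp: rkernel_def)
qed

theorem mainTheorem11:
  fixes R :: "('r, 'a) ring_scheme" and M :: "('m, 'r) rmod" and A B :: "'m set"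
  assumes "right_module R M"
    and "intrinsically_projective R M"
    and "submodule R M A" and "submodule R M B"
    and "fin_M_presented R M (submod M A)"
    and "fin_M_presented R M (submod M B)"
  shows "fin_M_presented R M (submod M (msum M A B)) \<longleftrightarrow>
         fin_M_generated R M (submod M (A \<inter> B))"
proof -
  note M = assms(1) and proj = assms(2) and A = assms(3) and B = assms(4)
  obtain a \<alpha>A where a: "a > 0" and \<alpha>A: "repi R (dsum M a) (submod M A) \<alpha>A"
    and kerA: "fin_M_generated R M (submod (dsum M a) (rkernel (dsum M a) M \<alpha>A))"
    using assms(5) unfolding fin_M_presented_iff_kernel rkernel_submod by blast
  obtain b \<alpha>B where b: "b > 0" and \<alpha>B: "repi R (dsum M b) (submod M B) \<alpha>B"
    and kerB: "fin_M_generated R M (submod (dsum M b) (rkernel (dsum M b) M \<alpha>B))"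
    using assms(6) unfolding fin_M_presented_iff_kernel rkernel_submod by blast
  note \<pi> = repi_dsum_copair_msum[OF M A B \<alpha>A \<alpha>B]
  show ?thesis
  proof
    assume "fin_M_presented R M (submod M (msum M A B))"
    with \<pi> have "fin_M_generated R M (submod (dsum M (a + b))
        (rkernel (dsum M (a + b)) M (dsum_copair M M a \<alpha>A \<alpha>B)))"
      using fin_M_generated_kernel_of_presented[OF M proj submodule_msum[OF M A B]] a by simp
    then show "fin_M_generated R M (submod M (A \<inter> B))"
      by (rule fin_M_generated_inter_of_rkernel_dsum_copair[OF M A B \<alpha>A \<alpha>B])
  next
    assume "fin_M_generated R M (submod M (A \<inter> B))"
    then show "fin_M_presented R M (submod M (msum M A B))"
      unfolding fin_M_presented_iff_kernel rkernel_submod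
      using fin_M_generated_rkernel_dsum_copair[OF M proj A B a \<alpha>A kerA b \<alpha>B kerB] \<pi> a by auto
  qed
qed

end
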